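(* Let $\theta_1,\theta_2$ be (unkeyed) proof labels and let $m\neq n$ be keys. Then $\theta_1\smile\theta_2$ if and only if $\theta_1[m]\mathrel\iota\theta_2[n]$.
   Context: Names $\mathsf N$ with bijection $\overline\cdot$ onto disjoint co-names; $\mathsf L=\mathsf N\cup\overline{\mathsf N}\cup\{\tau\}$ ($\alpha$ over $\mathsf L$, $\lambda$ over $\mathsf L\setminus\{\tau\}$); $\mathsf K$ a set of keys. Directions $D\in\{\mathrm L,\mathrm R\}$, $\bar{\mathrm L}=\mathrm R$, $\bar{\mathrm R}=\mathrm L$. Unkeyed proof labels: $\theta::=\upsilon\alpha\mid\upsilon\langle\upsilon_1\lambda,\upsilon_2\overline\lambda\rangle$, with $\upsilon,\upsilon_1,\upsilon_2\in\{|_{\mathrm L},|_{\mathrm R},+_{\mathrm L},+_{\mathrm R}\}^*$. Proof keyed labels: $\theta::=\upsilon\alpha[k]\mid\upsilon\langle\upsilon_1\lambda[k],\upsilon_2\overline\lambda[k]\rangle$, with $\mathrm{key}(\theta)=k$. For an unkeyed label $\theta$ and key $m$, $\theta[m]$ is the keyed label obtained by attaching $m$: $(\upsilon\alpha)[m]=\upsilon\alpha[m]$ and $(\upsilon\langle\upsilon_1\lambda,\upsilon_2\overline\lambda\rangle)[m]=\upsilon\langle\upsilon_1\lambda[m],\upsilon_2\overline\lambda[m]\rangle$. Concurrency $\smile$ on unkeyed proof labels is the least symmetric relation such that: (A1) $|_{\mathrm L}\theta\smile|_{\mathrm R}\theta'$ for all $\theta,\theta'$; (A2) if $\theta\smile\theta'$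 then $|_{\mathrm L}\theta\smile\langle\theta',\theta''\rangle$ and $|_{\mathrm R}\theta\smile\langle\theta'',\theta'\rangle$ (for any $\theta''$ making these synchronisation labels); (A3) if $\theta\smile\theta'$ then $|_D\theta\smile|_D\theta'$ and $+_D\theta\smile+_D\theta'$; (A4) if $\theta_{\mathrm L}\smile\theta_{\mathrm L}'$ and $\theta_{\mathrm R}\smile\theta_{\mathrm R}'$ then $\langle\theta_{\mathrm L},\theta_{\mathrm R}\rangle\smile\langle\theta_{\mathrm L}',\theta_{\mathrm R}'\rangle$. Independence $\iota$ on proof keyed labels is the least relation closed under ($\theta_{\mathrm L},\theta_{\mathrm R}$ components of a synchronisation label): (C1) $+_D\theta\mathrel\iota+_D\theta'$ if $\theta\mathrel\iota\theta'$; (P1) $|_D\theta\mathrel\iota|_D\theta'$ if $\theta\mathrel\iota\theta'$; (P2$_k$) $|_D\theta\mathrel\iota|_{\bar D}\theta'$ if $\mathrm{key}(\theta)\ne\mathrm{key}(\theta')$; (S1) $|_D\theta\mathrel\iota\langle\theta_{\mathrm L},\theta_{\mathrm R}\rangle$ if $\theta\mathrel\iota\theta_D$; (S2) $\langle\theta_{\mathrm L},\theta_{\mathrm R}\rangle\mathrel\iota|_D\theta$ if $\theta_D\mathrel\iota\theta$; (S3) $\langle\theta_1,\theta_2\rangle\mathrel\iota\langle\theta_1',\theta_2'\rangle$ if $\theta_1\mathrel\iota\theta_1'$ and $\theta_2\mathrel\iota\theta_2'$. *)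

theory Defs
  imports Main
begin

datatype 'n act = Name 'n | Coname 'n | Tau

fun co :: "'n act \<Rightarrow> 'n act" where
  "co (Name a) = Coname a"
| "co (Coname a) = Name a"
| "co Tau = Tau"

datatype dir = DL | DR

fun flip :: "dir \<Rightarrow> dir" where
  "flip DL = DR" | "flip DR = DL"

(* Raw label syntax: prefixes |_D (Par) and +_D (Cho), atoms, and synchronisations.
   Unkeyed labels: atoms are actions ('n act lab).
   Keyed labels: atoms are pairs (action, key) (('n act \<times> 'k) lab). *)
datatype 'a lab = Atom 'a | Par dir "'a lab" | Cho dir "'a lab" | Sync "'a lab" "'a lab"

fun is_pact :: "'a lab \<Rightarrow> bool" where
  "is_pact (Atom a) = True"
| "is_pact (Par d t) = is_pact t"
| "is_pact (Cho d t) = is_pact t"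
| "is_pact (Sync t u) = False"

fun atom_of :: "'a lab \<Rightarrow> 'a" where
  "atom_of (Atom a) = a"
| "atom_of (Par d t) = atom_of t"
| "atom_of (Cho d t) = atom_of t"
| "atom_of (Sync t u) = atom_of t"

fun proof_label :: "'n act lab \<Rightarrow> bool" where
  "proof_label (Atom a) = True"
| "proof_label (Par d t) = proof_label t"
| "proof_label (Cho d t) = proof_label t"
| "proof_label (Sync t u) = (is_pact t \<and> is_pact u \<and> atom_of t \<noteq> Tau \<and> atom_of u = co (atom_of t))"

fun keyed_proof_label :: "('n act \<times> 'k) lab \<Rightarrow> bool" where
  "keyed_proof_label (Atom a) = True"
| "keyed_proof_label (Par d t) = keyed_proof_label t"
| "keyed_proof_label (Cho d t) = keyed_proof_label t"
| "keyed_proof_label (Sync t u) = (is_pact t \<and> is_pact u \<and> fst (atom_of t) \<noteq> Tau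
      \<and> fst (atom_of u) = co (fst (atom_of t)) \<and> snd (atom_of u) = snd (atom_of t))"

definition key :: "('n act \<times> 'k) lab \<Rightarrow> 'k" where
  "key t = snd (atom_of t)"

definition attach :: "'n act lab \<Rightarrow> 'k \<Rightarrow> ('n act \<times> 'k) lab" where
  "attach t m = map_lab (\<lambda>a. (a, m)) t"

inductive conc :: "'n act lab \<Rightarrow> 'n act lab \<Rightarrow> bool" where
  sym: "conc t t' \<Longrightarrow> conc t' t"
| A1: "proof_label t \<Longrightarrow> proof_label t' \<Longrightarrow> conc (Par DL t) (Par DR t')"
| A2L: "conc t t' \<Longrightarrow> proof_label t \<Longrightarrow> proof_label (Sync t' t'') \<Longrightarrow> conc (Par DL t) (Sync t' t'')"
| A2R: "conc t t' \<Longrightarrow> proof_label t \<Longrightarrow> proof_label (Sync t'' t') \<Longrightarrow> conc (Par DR t) (Sync t'' t')"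
| A3P: "conc t t' \<Longrightarrow> conc (Par d t) (Par d t')"
| A3C: "conc t t' \<Longrightarrow> conc (Cho d t) (Cho d t')"
| A4: "conc tL tL' \<Longrightarrow> conc tR tR' \<Longrightarrow> proof_label (Sync tL tR) \<Longrightarrow> proof_label (Sync tL' tR')
       \<Longrightarrow> conc (Sync tL tR) (Sync tL' tR')"

fun comp :: "dir \<Rightarrow> 'a lab \<Rightarrow> 'a lab \<Rightarrow> 'a lab" where
  "comp DL tL tR = tL" | "comp DR tL tR = tR"

inductive indep :: "('n act \<times> 'k) lab \<Rightarrow> ('n act \<times> 'k) lab \<Rightarrow> bool" where
  C1: "indep t t' \<Longrightarrow> indep (Cho d t) (Cho d t')"
| P1: "indep t t' \<Longrightarrow> indep (Par d t) (Par d t')"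
| P2k: "keyed_proof_label t \<Longrightarrow> keyed_proof_label t' \<Longrightarrow> key t \<noteq> key t'
        \<Longrightarrow> indep (Par d t) (Par (flip d) t')"
| S1: "indep t (comp d tL tR) \<Longrightarrow> keyed_proof_label t \<Longrightarrow> keyed_proof_label (Sync tL tR)
       \<Longrightarrow> indep (Par d t) (Sync tL tR)"
| S2: "indep (comp d tL tR) t \<Longrightarrow> keyed_proof_label t \<Longrightarrow> keyed_proof_label (Sync tL tR)
       \<Longrightarrow> indep (Sync tL tR) (Par d t)"
| S3: "indep t1 t1' \<Longrightarrow> indep t2 t2' \<Longrightarrow> keyed_proof_label (Sync t1 t2)
       \<Longrightarrow> keyed_proof_label (Sync t1' t2') \<Longrightarrow> indep (Sync t1 t2) (Sync t1' t2')"

end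

theory Submission
  imports Defs
begin

(* Attaching a key changes nothing but the atoms, so the two relations can be compared rule by
   rule: A1 corresponds to P2k (the only place where m \<noteq> n is needed), A2 to S1/S2, A3 to C1/P1
   and A4 to S3.  Symmetry, built into concurrency, is derivable for independence. *)

lemma attach_simps [simp]:
  "attach (Atom a) m = Atom (a, m)"
  "attach (Par d t) m = Par d (attach t m)"
  "attach (Cho d t) m = Cho d (attach t m)"
  "attach (Sync t u) m = Sync (attach t m) (attach u m)"
  by (simp_all add: attach_def)

lemma is_pact_attach [simp]: "is_pact (attach t m) = is_pact t"
  by (induction t) auto

lemma atom_of_attach [simp]: "atom_of (attach t m) = (atom_of t, m)"
  by (induction t) auto

lemma Par_eq_attach_iff: "Par d x = attach t m \<longleftrightarrow> (\<exists>s. t = Par d s \<and> x = attach s m)"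
  by (cases t) auto

lemma Cho_eq_attach_iff: "Cho d x = attach t m \<longleftrightarrow> (\<exists>s. t = Cho d s \<and> x = attach s m)"
  by (cases t) auto

lemma Sync_eq_attach_iff:
  "Sync x y = attach t m \<longleftrightarrow> (\<exists>s u. t = Sync s u \<and> x = attach s m \<and> y = attach u m)"
  by (cases t) auto

lemma keyed_proof_label_attach [simp]: "keyed_proof_label (attach t m) = proof_label t"
  by (induction t) auto

lemma key_attach [simp]: "key (attach t m) = m"
  by (simp add: key_def)

lemma indep_sym: "indep a b \<Longrightarrow> indep b a"
proof (induction rule: indep.induct)
  case (P2k t t' d)
  then show ?case using indep.P2k[of t' t "flip d"] by (cases d) auto
qed (auto intro: indep.intros)

text \<open>A2 with the direction as a parameter, matching the shape of S1 and S2.\<close>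

lemma conc_Par_Sync:
  assumes "conc s (comp d u v)" and "proof_label s" and "proof_label (Sync u v)"
  shows "conc (Par d s) (Sync u v)"
  using assms by (cases d) (auto intro: conc.A2L conc.A2R)

lemma conc_imp_indep_attach:
  assumes "conc t t'" and "m \<noteq> n"
  shows "indep (attach t m) (attach t' n)"
  using assms
proof (induction arbitrary: m n rule: conc.induct)
  case (sym t t')
  then show ?case by (metis indep_sym)
next
  case (A1 t t')
  then show ?case using indep.P2k[of "attach t m" "attach t' n" DL] by simp
next
  case (A2L t t' t'')
  then show ?case using indep.S1[of "attach t m" DL "attach t' n" "attach t'' n"] by simp
next
  case (A2R t t' t'')
  then show ?case using indep.S1[of "attach t m" DR "attach t'' n" "attach t' n"] by simp
next
  case (A3P t t' d)
  then show ?case by (simp add: indep.P1)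
next
  case (A3C t t' d)
  then show ?case by (simp add: indep.C1)
next
  case (A4 tL tL' tR tR')
  then show ?case using indep.S3[of "attach tL m" "attach tL' n" "attach tR m" "attach tR' n"]
    by simp
qed

lemma indep_attach_imp_conc:
  assumes "indep (attach t1 m) (attach t2 n)"
  shows "conc t1 t2"
  using assms
proof (induction "attach t1 m" "attach t2 n" arbitrary: t1 t2 rule: indep.induct)
  case (C1 t t' d)
  then show ?case by (auto simp: Cho_eq_attach_iff intro: conc.A3C)
next
  case (P1 t t' d)
  then show ?case by (auto simp: Par_eq_attach_iff intro: conc.A3P)
next
  case (P2k t t' d)
  then obtain s s' where "t1 = Par d s" "t2 = Par (flip d) s'" "proof_label s" "proof_label s'"
    by (auto simp: Par_eq_attach_iff)
  then show ?case by (cases d) (simp_all add: conc.A1 conc.sym[OF conc.A1])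
next
  case (S1 t d tL tR)
  then obtain s u v where "t1 = Par d s" "t = attach s m" "t2 = Sync u v"
      "tL = attach u n" "tR = attach v n"
    by (auto simp: Par_eq_attach_iff Sync_eq_attach_iff)
  with S1 have "conc s (comp d u v)" by (cases d) auto
  with S1 \<open>t1 = Par d s\<close> \<open>t2 = Sync u v\<close> show ?case by (auto intro: conc_Par_Sync)
next
  case (S2 d tL tR t)
  then obtain s u v where "t2 = Par d s" "t = attach s n" "t1 = Sync u v"
      "tL = attach u m" "tR = attach v m"
    by (auto simp: Par_eq_attach_iff Sync_eq_attach_iff)
  with S2 have "conc (comp d u v) s" by (cases d) auto
  with S2 \<open>t1 = Sync u v\<close> \<open>t2 = Par d s\<close> have "conc t2 t1"
    by (auto intro: conc_Par_Sync[OF conc.sym])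
  then show ?case by (rule conc.sym)
next
  case (S3 a1 a1' a2 a2')
  then obtain s u s' u' where "t1 = Sync s u" "a1 = attach s m" "a2 = attach u m"
      "t2 = Sync s' u'" "a1' = attach s' n" "a2' = attach u' n"
    by (auto simp: Sync_eq_attach_iff)
  with S3 show ?case by (auto intro!: conc.A4)
qed

theorem lemmaB3:
  fixes t1 t2 :: "'n act lab" and m n :: 'k
  assumes "proof_label t1" and "proof_label t2" and "m \<noteq> n"
  shows "conc t1 t2 \<longleftrightarrow> indep (attach t1 m) (attach t2 n)"
  using conc_imp_indep_attach[OF _ assms(3)] indep_attach_imp_conc by (rule iffI)

end
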